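(* Let $B(x,y)=\sum_{n,k\ge0}B_{n,k}x^ny^k$ be the generating function of the Borel triangle $B_{n,k}=\frac{1}{n+1}\binom{2n+2}{n-k}\binom{n+k}{k}$, and let $c(x)=\frac{1-\sqrt{1-4x}}{2x}=\sum_{n\ge0}\frac{1}{n+1}\binom{2n}{n}x^n$ be the Catalan generating function. Then $$B(x,y)=\frac{1}{1-2x}\,c\!\left(\frac{x(x+y)}{(1-2x)^2}\right).$$
   Context: All identities are identities of formal power series in $x$ with coefficients polynomials in $y$. *)

theory Defs
  imports "HOL-Computational_Algebra.Formal_Power_Series"
          "HOL-Computational_Algebra.Polynomial"
          "HOL-Computational_Algebra.Fraction_Field"
begin

text \<open>Borel triangle entries; the binomial coefficient with negative lower index n-k is 0.\<close>
definition borel :: "nat \<Rightarrow> nat \<Rightarrow> rat" where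
  "borel n k = (if k \<le> n then
     (1 / of_nat (n + 1)) * of_nat ((2*n+2) choose (n-k)) * of_nat ((n+k) choose k) else 0)"

text \<open>Coefficient ring: the fraction field of Q[y], into which Q[y] embeds via p |-> Fract p 1.\<close>
type_synonym coef = "rat poly fract"

definition yvar :: coef where "yvar = Fract [:0, 1:] 1"

definition borel_gf :: "coef fps" where
  "borel_gf = Abs_fps (\<lambda>n. Fract (\<Sum>k\<le>n. monom (borel n k) k) 1)"

definition catalan_gf :: "coef fps" where
  "catalan_gf = Abs_fps (\<lambda>n. Fract [: (1 / of_nat (n + 1)) * of_nat ((2*n) choose n) :] 1)"

end

theory Submission
  imports Defs "HOL-Computational_Algebra.Polynomial_Factorial"
begin

text \<open>
  Since c(t) is the series of the Catalan numbers Cat(m), the coefficient of x^n y^k on the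
  right-hand side is the sum over m of Cat(m) (m choose k) (n + k choose 2m) 2^(n + k - 2m).
  Putting m = k + b, a factorial computation shows that n + 1 times the m-th term is
  (n + k choose k) times the b-th term of the coefficient of z^(n - k) in
  (1 + z)^(2n + 2) = (z^2 + (1 + 2z))^(n + 1). Hence the sum is
  (n + k choose k) (2n + 2 choose n - k) / (n + 1), which is the Borel number.
\<close>

unbundle fps_syntax

instance fract :: ("{idom, ring_char_0}") field_char_0
  by standard (auto intro!: injI simp: of_nat_fract eq_fract)

lemma coeff_linear_poly_power_eq:
  fixes a b :: "'a :: comm_semiring_1"
  shows "coeff ([:a, b:] ^ n) i = of_nat (n choose i) * b ^ i * a ^ (n - i)"
proof (cases "i \<le> n")
  case True
  then show ?thesis by (rule coeff_linear_poly_power)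
next
  case False
  then have "degree ([:a, b:] ^ n) < i"
    using degree_power_le[of "[:a, b:]" n] by (auto intro: le_less_trans)
  then show ?thesis using False by (simp add: coeff_eq_0 binomial_eq_0)
qed

lemma choose_double_eq_trinomial_sum:
  "(2 * p) choose r = (\<Sum>b\<le>r div 2. (p choose b) * ((p - b) choose (r - 2 * b)) * 2 ^ (r - 2 * b))"
proof -
  have "[:1, 1:] ^ 2 = monom 1 2 + [:1, 2 :: nat:]"
    by (simp add: power2_eq_square monom_altdef)
  then have expand: "[:1, 1:] ^ (2 * p)
      = (\<Sum>b\<le>p. of_nat (p choose b) * monom 1 (2 * b) * [:1, 2 :: nat:] ^ (p - b))"
    by (simp add: power_mult binomial_ring monom_power)
  have "(2 * p) choose r = coeff ([:1, 1:] ^ (2 * p)) r"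
    by (simp add: coeff_linear_poly_power_eq)
  also have "\<dots> = (\<Sum>b\<le>p. if b \<in> {..r div 2}
      then (p choose b) * ((p - b) choose (r - 2 * b)) * 2 ^ (r - 2 * b) else 0)"
    unfolding expand coeff_sum
    by (intro sum.cong) (auto simp: coeff_linear_poly_power_eq of_nat_poly coeff_monom_mult
        simp del: One_nat_def cong: if_cong)
  also have "\<dots> = (\<Sum>b \<in> {..p} \<inter> {..r div 2}.
      (p choose b) * ((p - b) choose (r - 2 * b)) * 2 ^ (r - 2 * b))"
    by (rule sum.inter_restrict[symmetric]) simp
  also have "\<dots> = (\<Sum>b\<le>r div 2. (p choose b) * ((p - b) choose (r - 2 * b)) * 2 ^ (r - 2 * b))"
    by (intro sum.mono_neutral_left) auto
  finally show ?thesis .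
qed

definition catalan :: "nat \<Rightarrow> rat" where
  "catalan m = 1 / of_nat (m + 1) * of_nat ((2 * m) choose m)"

lemma catalan_term_eq_trinomial_term:
  "of_nat (k + 2 * b + c + 1)
     * (catalan (k + b) * of_nat ((k + b) choose k) * of_nat ((2 * k + 2 * b + c) choose (2 * (k + b))))
   = of_nat (((2 * k + 2 * b + c) choose k) * ((k + 2 * b + c + 1) choose b) * ((k + b + c + 1) choose c))"
proof -
  define s where "s = k + b"
  define n where "n = k + 2 * b + c"
  define N where "N = 2 * k + 2 * b + c"
  define u where "u = (of_nat (n + 1) :: rat)"
  define v where "v = (of_nat (s + 1) :: rat)"
  define F where "F = (fact (s + c + 1) :: rat)"
  have nz: "u \<noteq> 0" "v \<noteq> 0" "F \<noteq> 0"
    by (simp_all add: u_def v_def F_def del: of_nat_Suc)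
  have cat: "catalan s = fact (2 * s) / (fact s * fact s * v)"
    using binomial_fact[of s "2 * s", where 'a = rat]
    by (simp add: catalan_def v_def mult_2 divide_divide_eq_left)
  have e1: "(of_nat (N choose (2 * s)) :: rat) = fact N / (fact (2 * s) * fact c)"
    using binomial_fact[of "2 * s" N] by (simp add: N_def s_def)
  have e2: "(of_nat (s choose k) :: rat) = fact s / (fact k * fact b)"
    using binomial_fact[of k s] by (simp add: s_def)
  have e3: "(of_nat (N choose k) :: rat) = fact N / (fact k * fact n)"
    using binomial_fact[of k N] by (simp add: N_def n_def add.assoc)
  have e4: "(of_nat ((n + 1) choose b) :: rat) = u * fact n / (fact b * F)"
    using binomial_fact[of b "n + 1", where 'a = rat]
    by (simp add: n_def s_def u_def F_def ac_simps)
  have e5: "(of_nat ((s + c + 1) choose c) :: rat) = F / (fact c * (v * fact s))"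
    using binomial_fact[of c "s + c + 1", where 'a = rat] by (simp add: v_def F_def)
  have "u * (catalan s * of_nat (s choose k) * of_nat (N choose (2 * s)))
      = of_nat ((N choose k) * ((n + 1) choose b) * ((s + c + 1) choose c))"
    unfolding of_nat_mult cat e1 e2 e3 e4 e5 using nz by (simp add: field_simps)
  then show ?thesis
    unfolding s_def n_def N_def u_def .
qed

lemma borel_eq_sum:
  assumes "k \<le> n"
  shows "borel n k = (\<Sum>m\<le>n. catalan m * of_nat (m choose k) * of_nat ((n + k) choose (2 * m))
    * 2 ^ (n + k - 2 * m))"
    (is "_ = (\<Sum>m\<le>n. ?t m)")
proof -
  define d where "d = (n - k) div 2"
  let ?T = "\<lambda>b. ((n + 1) choose b) * ((n + 1 - b) choose (n - k - 2 * b)) * 2 ^ (n - k - 2 * b)"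
  have scaled_term: "of_nat (n + 1) * ?t (k + b) = of_nat (((n + k) choose k) * ?T b)" if "b \<in> {..d}" for b
  proof -
    have "k + 2 * b \<le> n"
      using that assms by (simp add: d_def)
    then obtain c where n: "n = k + 2 * b + c"
      using le_Suc_ex by blast
    have idx: "n + k = 2 * k + 2 * b + c" "n + 1 = k + 2 * b + c + 1"
        "2 * k + 2 * b + c - 2 * (k + b) = c" "k + 2 * b + c + 1 - b = k + b + c + 1" "n - k - 2 * b = c"
      using n by simp_all
    have "of_nat (n + 1) * ?t (k + b) = of_nat (k + 2 * b + c + 1)
        * (catalan (k + b) * of_nat ((k + b) choose k) * of_nat ((2 * k + 2 * b + c) choose (2 * (k + b))))
        * 2 ^ c"
      unfolding idx by (simp only: mult.assoc)
    also have "\<dots> = of_nat (((2 * k + 2 * b + c) choose k) * ((k + 2 * b + c + 1) choose b)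
        * ((k + b + c + 1) choose c) * 2 ^ c)"
      unfolding catalan_term_eq_trinomial_term by simp
    finally show ?thesis
      unfolding idx by (simp only: mult.assoc)
  qed
  have "(\<Sum>m\<le>n. ?t m) = (\<Sum>m = k..k + d. ?t m)"
    using assms by (intro sum.mono_neutral_right) (auto simp: d_def binomial_eq_0)
  also have "\<dots> = (\<Sum>b\<le>d. ?t (k + b))"
    by (simp add: sum.atLeastAtMost_shift_0 atLeast0AtMost)
  finally have "of_nat (n + 1) * (\<Sum>m\<le>n. ?t m) = of_nat (((n + k) choose k) * (\<Sum>b\<le>d. ?T b))"
    by (simp only: sum_distrib_left scaled_term of_nat_sum cong: sum.cong)
  also have "\<dots> = of_nat (((n + k) choose k) * ((2 * (n + 1)) choose (n - k)))"
    unfolding choose_double_eq_trinomial_sum d_def ..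
  finally show ?thesis
    unfolding borel_def using assms by (simp add: field_simps)
qed

lemma fps_mult_compose_nth:
  fixes a b q :: "'a :: comm_ring_1 fps"
  assumes "b $ 0 = 0"
  shows "(q * (a oo b)) $ n = (\<Sum>m\<le>n. a $ m * (q * b ^ m) $ n)"
proof -
  have compose: "(a oo b) $ j = (\<Sum>m\<le>n. a $ m * (b ^ m) $ j)" if "j \<le> n" for j
    unfolding fps_compose_nth atLeast0AtMost using that startsby_zero_power_prefix[OF assms]
    by (intro sum.mono_neutral_left) auto
  have "(q * (a oo b)) $ n = (\<Sum>j\<le>n. \<Sum>m\<le>n. q $ j * (a $ m * (b ^ m) $ (n - j)))"
    unfolding fps_mult_nth atLeast0AtMost by (simp add: compose sum_distrib_left)
  also have "\<dots> = (\<Sum>m\<le>n. a $ m * (\<Sum>j\<le>n. q $ j * (b ^ m) $ (n - j)))"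
    by (subst sum.swap) (simp add: sum_distrib_left mult.left_commute)
  also have "\<dots> = (\<Sum>m\<le>n. a $ m * (q * b ^ m) $ n)"
    by (simp add: fps_mult_nth atLeast0AtMost)
  finally show ?thesis .
qed

lemma fps_nth_inverse_one_minus_two_X_power:
  "(inverse (1 - 2 * fps_X :: 'a :: field_char_0 fps) ^ (r + 1)) $ j = of_nat ((r + j) choose j) * 2 ^ j"
proof -
  have "inverse (1 - 2 * fps_X :: 'a fps) ^ (r + 1) = inverse ((1 - fps_const 2 * fps_X) ^ (r + 1))"
    by (simp only: fps_inverse_power numeral_fps_const)
  then show ?thesis
    using one_minus_const_fps_X_neg_power'[of "r + 1" "2 :: 'a"] by simp
qed

lemma fps_nth_X_power_mult_inverse_power:
  assumes "k \<le> m"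
  shows "(fps_X ^ (2 * m - k) * inverse (1 - 2 * fps_X :: 'a :: field_char_0 fps) ^ (2 * m + 1)) $ n
    = of_nat ((n + k) choose (2 * m)) * 2 ^ (n + k - 2 * m)"
proof (cases "2 * m \<le> n + k")
  case True
  then have "n - (2 * m - k) = n + k - 2 * m" and "2 * m + (n + k - 2 * m) = n + k"
    using assms by simp_all
  moreover have "(n + k) choose (n + k - 2 * m) = (n + k) choose (2 * m)"
    using True binomial_symmetric[of "2 * m" "n + k"] by simp
  ultimately show ?thesis
    using True unfolding fps_X_power_mult_nth fps_nth_inverse_one_minus_two_X_power by simp
next
  case False
  then show ?thesis by (simp add: fps_X_power_mult_nth binomial_eq_0)
qed

lemma fps_nth_inverse_mult_substitution_power:
  fixes y :: "'a :: field_char_0"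
  shows "(inverse (1 - 2 * fps_X) * (fps_X * (fps_X + fps_const y) * inverse ((1 - 2 * fps_X) ^ 2)) ^ m) $ n
    = (\<Sum>k\<le>m. of_nat ((m choose k) * ((n + k) choose (2 * m)) * 2 ^ (n + k - 2 * m)) * y ^ k)"
proof -
  let ?q = "inverse (1 - 2 * fps_X :: 'a fps)"
  let ?u = "fps_X * (fps_X + fps_const y) * inverse ((1 - 2 * fps_X) ^ 2)"
  have expand: "?q * ?u ^ m
      = (\<Sum>k\<le>m. fps_const (of_nat (m choose k) * y ^ k) * (fps_X ^ (2 * m - k) * ?q ^ (2 * m + 1)))"
  proof -
    have "?q * ?u ^ m = fps_X ^ m * (fps_const y + fps_X) ^ m * ?q ^ (2 * m + 1)"
      by (simp only: power_mult_distrib fps_inverse_power power_mult[symmetric] add.commute[of fps_X]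
          power_add power_one_right mult_ac)
    also have "\<dots> = (\<Sum>k\<le>m. fps_X ^ m * (of_nat (m choose k) * fps_const y ^ k * fps_X ^ (m - k))
        * ?q ^ (2 * m + 1))"
      by (simp only: binomial_ring sum_distrib_left sum_distrib_right)
    also have "\<dots> = (\<Sum>k\<le>m. fps_const (of_nat (m choose k) * y ^ k)
        * (fps_X ^ (2 * m - k) * ?q ^ (2 * m + 1)))"
    proof (rule sum.cong[OF refl])
      fix k assume "k \<in> {..m}"
      then have "fps_X ^ (2 * m - k) = (fps_X ^ m * fps_X ^ (m - k) :: 'a fps)"
        by (simp add: power_add[symmetric])
      then show "fps_X ^ m * (of_nat (m choose k) * fps_const y ^ k * fps_X ^ (m - k)) * ?q ^ (2 * m + 1)
          = fps_const (of_nat (m choose k) * y ^ k) * (fps_X ^ (2 * m - k) * ?q ^ (2 * m + 1))"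
        by (simp add: fps_const_power mult_ac flip: fps_of_nat fps_const_mult)
    qed
    finally show ?thesis .
  qed
  show ?thesis
    unfolding expand fps_sum_nth fps_mult_left_const_nth
  proof (rule sum.cong[OF refl])
    fix k assume "k \<in> {..m}"
    then have "(fps_X ^ (2 * m - k) * ?q ^ (2 * m + 1)) $ n
        = of_nat ((n + k) choose (2 * m)) * 2 ^ (n + k - 2 * m)"
      by (intro fps_nth_X_power_mult_inverse_power) simp
    then show "of_nat (m choose k) * y ^ k * (fps_X ^ (2 * m - k) * ?q ^ (2 * m + 1)) $ n
        = of_nat ((m choose k) * ((n + k) choose (2 * m)) * 2 ^ (n + k - 2 * m)) * y ^ k"
      by (simp add: mult_ac)
  qed
qed

lemma to_fract_sum: "to_fract (\<Sum>i\<in>A. f i) = (\<Sum>i\<in>A. to_fract (f i))"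
  by (induction A rule: infinite_finite_induct) simp_all

lemma to_fract_power: "to_fract (x ^ k) = to_fract x ^ k"
  by (induction k) simp_all

lemma to_fract_of_nat: "to_fract (of_nat k) = of_nat k"
  by (simp add: to_fract_def of_nat_fract)

lemma yvar_eq_to_fract: "yvar = to_fract [:0, 1:]"
  by (simp add: yvar_def to_fract_def)

lemma to_fract_monom_eq:
  "to_fract [:c:] * (of_nat N * yvar ^ k) = to_fract (monom (c * of_nat N) k)"
proof -
  have monom: "monom (c * of_nat N) k = [:c:] * (of_nat N * [:0, 1:] ^ k)"
    by (simp add: monom_altdef of_nat_poly mult.commute)
  show ?thesis
    unfolding monom yvar_eq_to_fract to_fract_mult to_fract_power to_fract_of_nat ..
qed

lemma catalan_gf_nth: "catalan_gf $ m = to_fract [:catalan m:]"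
  by (simp add: catalan_gf_def catalan_def to_fract_def)

lemma sum_atMost_triangle_swap:
  fixes f :: "nat \<Rightarrow> nat \<Rightarrow> 'a :: comm_monoid_add"
  assumes "\<And>m k. m < k \<Longrightarrow> f m k = 0"
  shows "(\<Sum>m\<le>n. \<Sum>k\<le>m. f m k) = (\<Sum>k\<le>n. \<Sum>m\<le>n. f m k)"
proof -
  have "(\<Sum>m\<le>n. \<Sum>k\<le>m. f m k) = (\<Sum>m\<le>n. \<Sum>k\<le>n. f m k)"
    using assms by (intro sum.cong refl sum.mono_neutral_left) auto
  also have "\<dots> = (\<Sum>k\<le>n. \<Sum>m\<le>n. f m k)"
    by (rule sum.swap)
  finally show ?thesis .
qed

theorem mainTheorem3:
  shows "borel_gf = inverse (1 - 2 * fps_X) *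
     fps_compose catalan_gf (fps_X * (fps_X + fps_const yvar) * inverse ((1 - 2 * fps_X) ^ 2))"
proof (rule fps_ext)
  fix n
  define u :: "coef fps" where "u = fps_X * (fps_X + fps_const yvar) * inverse ((1 - 2 * fps_X) ^ 2)"
  define t where
    "t m k = catalan m * of_nat ((m choose k) * ((n + k) choose (2 * m)) * 2 ^ (n + k - 2 * m))" for m k
  have "(inverse (1 - 2 * fps_X) * (catalan_gf oo u)) $ n
      = (\<Sum>m\<le>n. catalan_gf $ m * (inverse (1 - 2 * fps_X) * u ^ m) $ n)"
    by (rule fps_mult_compose_nth) (simp add: u_def)
  also have "\<dots> = (\<Sum>m\<le>n. \<Sum>k\<le>m. to_fract (monom (t m k) k))"
    unfolding u_def fps_nth_inverse_mult_substitution_power sum_distrib_left catalan_gf_nth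
      to_fract_monom_eq t_def ..
  also have "\<dots> = (\<Sum>k\<le>n. to_fract (monom (\<Sum>m\<le>n. t m k) k))"
    by (subst sum_atMost_triangle_swap) (simp_all add: t_def binomial_eq_0 monom_sum to_fract_sum)
  also have "\<dots> = to_fract (\<Sum>k\<le>n. monom (borel n k) k)"
    by (simp add: to_fract_sum t_def borel_eq_sum mult.assoc)
  also have "\<dots> = borel_gf $ n"
    by (simp add: borel_gf_def to_fract_def)
  finally show "borel_gf $ n = (inverse (1 - 2 * fps_X) * (catalan_gf oo u)) $ n" ..
qed

end
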